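(* Consider the network Polya contagion process on the complete graph on $N$ nodes with $\Delta_{r,i}(t)=\Delta_{b,i}(t)=\Delta>0$ for all nodes $i$ and times $t$. Let $\bar T=\sum_{k=1}^N T_k$, $\rho=\frac{\sum_{k=1}^N R_k}{\bar T}$ and $\delta=\frac{N\Delta}{\bar T}$. Then for every node $i$ and every $n\ge 2$, \[ P(Z_{i,n}=1,Z_{i,1}=1)=\rho\,\frac{\rho+(1+(N-1)\rho)\frac{\delta}{N}}{1+\delta}, \] and moreover, for any other node $k$ (and $n\ge 2$), \[ P(Z_{k,n}=1,Z_{i,1}=1)=\rho\,\frac{\rho+(1+(N-1)\rho)\frac{\delta}{N}}{1+\delta}. \]
   Context: Network Polya contagion process: $\mathcal{G}=(V,\mathcal{E})$ is a connected undirected graph, $V=\{1,\dots,N\}$, $\mathcal{N}_i'=\{i\}\cup\{v:(i,v)\in\mathcal{E}\}$; the complete graph has $\mathcal{N}_i'=V$ for all $i$. Each node $i$ has an urn initially containing $R_i\in\mathbb{Z}_{>0}$ red and $B_i\in\mathbb{Z}_{>0}$ black balls, $T_i=R_i+B_i$. The super urn of node $i$ is the union of the urns of nodes in $\mathcal{N}_i'$. At each time $t=1,2,\dots$ every node $i$ simultaneously draws from its super urn; $Z_{i,t}=1$ if red, $0$ if black; then $\Delta_{r,i}(t)$ red balls (if red drawn) or $\Delta_{b,i}(t)$ black balls (if black drawn) are added to node $i$'s own urn. Given the whole history, the time-$n$ draws are conditionally independent with $P(Z_{i,n}=1\mid\{Z_j^{n-1}\}_{j=1}^N)=\dfrac{\sum_{j\in\mathcal{N}_i'}\big(R_j+\sum_{t=1}^{n-1}Z_{j,t}\Delta_{r,j}(t)\big)}{\sum_{j\in\mathcal{N}_i'}\big(T_j+\sum_{t=1}^{n-1}(Z_{j,t}\Delta_{r,j}(t)+(1-Z_{j,t})\Delta_{b,j}(t))\big)}$.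 *)

theory Defs
  imports Complex_Main
begin

text \<open>A history up to time n is encoded as a set S of pairs (j,t), j in V, t in {1..n};
  (j,t) in S means Z_{j,t} = 1 (red drawn by node j at time t).
  nb i is the closed neighbourhood N_i' of node i.
  Dr j t, Db j t are the numbers of red / black balls added.\<close>

definition polya_red_prob ::
  "(nat \<Rightarrow> nat set) \<Rightarrow> (nat \<Rightarrow> nat) \<Rightarrow> (nat \<Rightarrow> nat) \<Rightarrow>
   (nat \<Rightarrow> nat \<Rightarrow> real) \<Rightarrow> (nat \<Rightarrow> nat \<Rightarrow> real) \<Rightarrow>
   (nat \<times> nat) set \<Rightarrow> nat \<Rightarrow> nat \<Rightarrow> real" where
  "polya_red_prob nb R B Dr Db S i n =
     (\<Sum>j\<in>nb i. real (R j) + (\<Sum>t\<in>{1..<n}. if (j,t) \<in> S then Dr j t else 0)) /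
     (\<Sum>j\<in>nb i. real (R j + B j) +
        (\<Sum>t\<in>{1..<n}. if (j,t) \<in> S then Dr j t else Db j t))"

definition polya_hist_prob ::
  "nat \<Rightarrow> (nat \<Rightarrow> nat set) \<Rightarrow> (nat \<Rightarrow> nat) \<Rightarrow> (nat \<Rightarrow> nat) \<Rightarrow>
   (nat \<Rightarrow> nat \<Rightarrow> real) \<Rightarrow> (nat \<Rightarrow> nat \<Rightarrow> real) \<Rightarrow>
   nat \<Rightarrow> (nat \<times> nat) set \<Rightarrow> real" where
  "polya_hist_prob N nb R B Dr Db n S =
     (\<Prod>t\<in>{1..n}. \<Prod>i\<in>{1..N}.
        (if (i,t) \<in> S then polya_red_prob nb R B Dr Db S i t
         else 1 - polya_red_prob nb R B Dr Db S i t))"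

definition polya_prob ::
  "nat \<Rightarrow> (nat \<Rightarrow> nat set) \<Rightarrow> (nat \<Rightarrow> nat) \<Rightarrow> (nat \<Rightarrow> nat) \<Rightarrow>
   (nat \<Rightarrow> nat \<Rightarrow> real) \<Rightarrow> (nat \<Rightarrow> nat \<Rightarrow> real) \<Rightarrow>
   nat \<Rightarrow> ((nat \<times> nat) set \<Rightarrow> bool) \<Rightarrow> real" where
  "polya_prob N nb R B Dr Db n E =
     (\<Sum>S\<in>Pow ({1..N} \<times> {1..n}). if E S then polya_hist_prob N nb R B Dr Db n S else 0)"

end

theory Submission
  imports Defs
begin

text \<open>On the complete graph every node draws from the same super urn, namely all balls of
  the network, so at time \<open>t\<close> every node draws red with the same probability \<open>q\<^sub>t\<close>,
  the red fraction of the whole network; with \<open>\<Delta>\<^sub>r = \<Delta>\<^sub>b = \<Delta>\<close> the denominator of \<open>q\<^sub>t\<close>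
  is deterministic. Given the past, the number of red draws at time \<open>t\<close> is binomial
  with parameters \<open>N\<close> and \<open>q\<^sub>t\<close>, which makes \<open>q\<^sub>t\<close> a martingale. Hence
  \<open>P(Z\<^sub>k\<^sub>,\<^sub>n = 1, Z\<^sub>i\<^sub>,\<^sub>1 = 1) = E[Z\<^sub>i\<^sub>,\<^sub>1 q\<^sub>n] = E[Z\<^sub>i\<^sub>,\<^sub>1 q\<^sub>2]\<close>, and the last expectation is
  computed from the first and second moments of the binomial number of red draws at time 1.\<close>

lemma polya_red_prob_cong:
  assumes "\<And>j t'. t' < t \<Longrightarrow> (j, t') \<in> S \<longleftrightarrow> (j, t') \<in> S'"
  shows "polya_red_prob nb R B Dr Db S i t = polya_red_prob nb R B Dr Db S' i t"
  unfolding polya_red_prob_def using assms by (intro arg_cong2[where f = "(/)"] sum.cong) auto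

definition polya_step_prob ::
  "nat \<Rightarrow> (nat \<Rightarrow> nat set) \<Rightarrow> (nat \<Rightarrow> nat) \<Rightarrow> (nat \<Rightarrow> nat) \<Rightarrow>
   (nat \<Rightarrow> nat \<Rightarrow> real) \<Rightarrow> (nat \<Rightarrow> nat \<Rightarrow> real) \<Rightarrow> (nat \<times> nat) set \<Rightarrow> nat \<Rightarrow> nat set \<Rightarrow> real" where
  "polya_step_prob N nb R B Dr Db S t A =
     (\<Prod>j\<in>{1..N}. if j \<in> A then polya_red_prob nb R B Dr Db S j t
                   else 1 - polya_red_prob nb R B Dr Db S j t)"

lemma polya_hist_prob_Suc:
  assumes "S \<subseteq> {1..N} \<times> {1..n}" "A \<subseteq> {1..N}"
  shows "polya_hist_prob N nb R B Dr Db (Suc n) (S \<union> A \<times> {Suc n})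
       = polya_hist_prob N nb R B Dr Db n S * polya_step_prob N nb R B Dr Db S (Suc n) A"
proof -
  let ?S = "S \<union> A \<times> {Suc n}" and ?p = "polya_red_prob nb R B Dr Db"
  have red: "?p ?S j t = ?p S j t" if "t \<le> Suc n" for j t
    using that by (intro polya_red_prob_cong) auto
  have past: "(\<Prod>t\<in>{1..n}. \<Prod>j\<in>{1..N}. if (j, t) \<in> ?S then ?p ?S j t else 1 - ?p ?S j t)
      = polya_hist_prob N nb R B Dr Db n S"
    unfolding polya_hist_prob_def by (intro prod.cong) (auto simp: red)
  have now: "(\<Prod>j\<in>{1..N}. if (j, Suc n) \<in> ?S then ?p ?S j (Suc n) else 1 - ?p ?S j (Suc n))
      = polya_step_prob N nb R B Dr Db S (Suc n) A"
    unfolding polya_step_prob_def using assms(1) by (intro prod.cong) (auto simp: red)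
  show ?thesis
    unfolding polya_hist_prob_def prod.cl_ivl_Suc past now by simp
qed

definition polya_expect ::
  "nat \<Rightarrow> (nat \<Rightarrow> nat set) \<Rightarrow> (nat \<Rightarrow> nat) \<Rightarrow> (nat \<Rightarrow> nat) \<Rightarrow>
   (nat \<Rightarrow> nat \<Rightarrow> real) \<Rightarrow> (nat \<Rightarrow> nat \<Rightarrow> real) \<Rightarrow> nat \<Rightarrow> ((nat \<times> nat) set \<Rightarrow> real) \<Rightarrow> real" where
  "polya_expect N nb R B Dr Db n g =
     (\<Sum>S\<in>Pow ({1..N} \<times> {1..n}). g S * polya_hist_prob N nb R B Dr Db n S)"

lemma polya_prob_eq_expect:
  "polya_prob N nb R B Dr Db n E = polya_expect N nb R B Dr Db n (\<lambda>S. of_bool (E S))"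
  unfolding polya_prob_def polya_expect_def by (intro sum.cong) simp_all

lemma polya_expect_0: "polya_expect N nb R B Dr Db 0 g = g {}"
  unfolding polya_expect_def polya_hist_prob_def by simp

lemma polya_expect_cong:
  "(\<And>S. S \<subseteq> {1..N} \<times> {1..n} \<Longrightarrow> g S = h S) \<Longrightarrow>
   polya_expect N nb R B Dr Db n g = polya_expect N nb R B Dr Db n h"
  unfolding polya_expect_def by (intro sum.cong) auto

lemma bij_betw_Pow_times_Suc:
  "bij_betw (\<lambda>(S, A). S \<union> A \<times> {Suc n}) (Pow (V \<times> {1..n}) \<times> Pow V) (Pow (V \<times> {1..Suc n}))"
proof (rule bij_betw_byWitness[where f' = "\<lambda>S. ({x \<in> S. snd x \<le> n}, {j. (j, Suc n) \<in> S})"])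
  show "\<forall>S\<in>Pow (V \<times> {1..Suc n}). (\<lambda>(S, A). S \<union> A \<times> {Suc n})
          ({x \<in> S. snd x \<le> n}, {j. (j, Suc n) \<in> S}) = S"
    by (force simp: le_Suc_eq)
qed auto

text \<open>The tower property: condition on the history up to time \<open>n\<close> and average over the set
  \<open>A\<close> of nodes drawing red at time \<open>n + 1\<close>.\<close>
lemma polya_expect_Suc:
  "polya_expect N nb R B Dr Db (Suc n) g = polya_expect N nb R B Dr Db n
     (\<lambda>S. \<Sum>A\<in>Pow {1..N}. g (S \<union> A \<times> {Suc n}) * polya_step_prob N nb R B Dr Db S (Suc n) A)"
proof -
  let ?H = "polya_hist_prob N nb R B Dr Db" and ?W = "polya_step_prob N nb R B Dr Db"
  have "polya_expect N nb R B Dr Db (Suc n) g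
      = (\<Sum>(S, A)\<in>Pow ({1..N} \<times> {1..n}) \<times> Pow {1..N}.
           g (S \<union> A \<times> {Suc n}) * ?H (Suc n) (S \<union> A \<times> {Suc n}))"
    unfolding polya_expect_def
    by (subst sum.reindex_bij_betw[OF bij_betw_Pow_times_Suc, symmetric]) (simp add: case_prod_unfold)
  also have "\<dots> = (\<Sum>S\<in>Pow ({1..N} \<times> {1..n}). \<Sum>A\<in>Pow {1..N}.
                    g (S \<union> A \<times> {Suc n}) * (?H n S * ?W S (Suc n) A))"
    unfolding sum.cartesian_product[symmetric]
    by (intro sum.cong) (auto simp: polya_hist_prob_Suc)
  finally show ?thesis
    unfolding polya_expect_def by (simp add: sum_distrib_left sum_distrib_right mult_ac)
qed

definition bernoulli_weight :: "nat set \<Rightarrow> real \<Rightarrow> nat set \<Rightarrow> real" where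
  "bernoulli_weight V p A = (\<Prod>j\<in>V. if j \<in> A then p else 1 - p)"

lemma sum_bernoulli_weight_superset:
  assumes "finite V" "K \<subseteq> V"
  shows "(\<Sum>A\<in>Pow V. if K \<subseteq> A then bernoulli_weight V p A else 0) = p ^ card K"
proof -
  have "(\<Sum>A\<in>Pow V. if K \<subseteq> A then bernoulli_weight V p A else 0)
      = (\<Sum>A\<in>Pow V. (\<Prod>j\<in>A. p) * (\<Prod>j\<in>V - A. if j \<in> K then 0 else 1 - p))"
  proof (intro sum.cong refl)
    fix A assume A: "A \<in> Pow V"
    show "(if K \<subseteq> A then bernoulli_weight V p A else 0)
        = (\<Prod>j\<in>A. p) * (\<Prod>j\<in>V - A. if j \<in> K then 0 else 1 - p)"
    proof (cases "K \<subseteq> A")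
      case True
      have "(\<Prod>j\<in>V - A. if j \<in> K then 0 else 1 - p) = (\<Prod>j\<in>V - A. 1 - p)"
        using True by (intro prod.cong) auto
      moreover have "bernoulli_weight V p A = (\<Prod>j\<in>A. p) * (\<Prod>j\<in>V - A. 1 - p)"
        unfolding bernoulli_weight_def using A assms(1)
        by (simp add: prod.If_cases Int_absorb1 Diff_eq)
      ultimately show ?thesis using True by simp
    next
      case False
      then have "\<exists>j\<in>V - A. j \<in> K" using assms(2) by auto
      then show ?thesis using False assms(1) by (auto intro: prod_zero)
    qed
  qed
  also have "\<dots> = (\<Prod>j\<in>V. p + (if j \<in> K then 0 else 1 - p))"
    by (rule prod_add[OF assms(1), symmetric])
  also have "\<dots> = (\<Prod>j\<in>V. if j \<in> K then p else 1)"
    by (intro prod.cong) auto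
  also have "\<dots> = p ^ card K"
    using assms by (simp add: prod.If_cases Int_absorb1)
  finally show ?thesis .
qed

lemma sum_bernoulli_weight: "finite V \<Longrightarrow> (\<Sum>A\<in>Pow V. bernoulli_weight V p A) = 1"
  using sum_bernoulli_weight_superset[of V "{}" p] by simp

lemma sum_bernoulli_weight_mem:
  "finite V \<Longrightarrow> k \<in> V \<Longrightarrow> (\<Sum>A\<in>Pow V. if k \<in> A then bernoulli_weight V p A else 0) = p"
  using sum_bernoulli_weight_superset[of V "{k}" p] by simp

lemma sum_bernoulli_weight_mem2:
  "finite V \<Longrightarrow> k \<in> V \<Longrightarrow> j \<in> V \<Longrightarrow>
   (\<Sum>A\<in>Pow V. if k \<in> A \<and> j \<in> A then bernoulli_weight V p A else 0) = (if j = k then p else p\<^sup>2)"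
  using sum_bernoulli_weight_superset[of V "{k, j}" p] by (auto simp: card_insert_if power2_eq_square)

lemma mult_card_eq_sum_mem:
  "finite V \<Longrightarrow> A \<subseteq> V \<Longrightarrow> c * real (card A) = (\<Sum>j\<in>V. if j \<in> A then c else 0)"
  by (simp add: sum.If_cases Int_absorb1)

lemma sum_bernoulli_weight_card:
  assumes "finite V"
  shows "(\<Sum>A\<in>Pow V. bernoulli_weight V p A * real (card A)) = real (card V) * p"
proof -
  have "(\<Sum>A\<in>Pow V. bernoulli_weight V p A * real (card A))
      = (\<Sum>A\<in>Pow V. \<Sum>j\<in>V. if j \<in> A then bernoulli_weight V p A else 0)"
    using assms by (intro sum.cong) (simp_all add: mult_card_eq_sum_mem)
  also have "\<dots> = (\<Sum>j\<in>V. \<Sum>A\<in>Pow V. if j \<in> A then bernoulli_weight V p A else 0)"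
    by (rule sum.swap)
  also have "\<dots> = real (card V) * p"
    using assms by (simp add: sum_bernoulli_weight_mem)
  finally show ?thesis .
qed

lemma sum_bernoulli_weight_mem_card:
  assumes "finite V" "i \<in> V"
  shows "(\<Sum>A\<in>Pow V. (if i \<in> A then bernoulli_weight V p A else 0) * real (card A))
       = p + (real (card V) - 1) * p\<^sup>2"
proof -
  have "(\<Sum>A\<in>Pow V. (if i \<in> A then bernoulli_weight V p A else 0) * real (card A))
      = (\<Sum>A\<in>Pow V. \<Sum>j\<in>V. if i \<in> A \<and> j \<in> A then bernoulli_weight V p A else 0)"
    using assms(1) by (intro sum.cong) (simp_all add: mult_card_eq_sum_mem)
  also have "\<dots> = (\<Sum>j\<in>V. \<Sum>A\<in>Pow V. if i \<in> A \<and> j \<in> A then bernoulli_weight V p A else 0)"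
    by (rule sum.swap)
  also have "\<dots> = (\<Sum>j\<in>V. if j = i then p else p\<^sup>2)"
    using assms by (intro sum.cong) (simp_all add: sum_bernoulli_weight_mem2)
  also have "\<dots> = p + real (card (V - {i})) * p\<^sup>2"
    using assms by (simp add: sum.delta_remove)
  also have "card (V - {i}) = card V - 1"
    using assms(2) by (rule card_Diff_singleton)
  also have "real (card V - 1) = real (card V) - 1"
    using assms by (subst of_nat_diff) (auto simp: Suc_le_eq card_gt_0_iff)
  finally show ?thesis .
qed

abbreviation complete_polya_expect ::
  "nat \<Rightarrow> (nat \<Rightarrow> nat) \<Rightarrow> (nat \<Rightarrow> nat) \<Rightarrow> real \<Rightarrow> nat \<Rightarrow> ((nat \<times> nat) set \<Rightarrow> real) \<Rightarrow> real" where
  "complete_polya_expect N R B \<Delta> \<equiv> polya_expect N (\<lambda>_. {1..N}) R B (\<lambda>_ _. \<Delta>) (\<lambda>_ _. \<Delta>)"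

definition red_draws :: "nat \<Rightarrow> (nat \<times> nat) set \<Rightarrow> nat \<Rightarrow> nat" where
  "red_draws N S t = card (S \<inter> {1..N} \<times> {1..<t})"

text \<open>The red fraction of the whole network before time \<open>t\<close>; the factor \<open>t - 1\<close> is
  truncated, so only \<open>t \<ge> 1\<close> is meaningful.\<close>
definition network_red_frac ::
  "nat \<Rightarrow> (nat \<Rightarrow> nat) \<Rightarrow> (nat \<Rightarrow> nat) \<Rightarrow> real \<Rightarrow> (nat \<times> nat) set \<Rightarrow> nat \<Rightarrow> real" where
  "network_red_frac N R B \<Delta> S t =
     ((\<Sum>j\<in>{1..N}. real (R j)) + \<Delta> * real (red_draws N S t)) /
     ((\<Sum>j\<in>{1..N}. real (R j + B j)) + real N * \<Delta> * real (t - 1))"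

lemma polya_red_prob_complete:
  "polya_red_prob (\<lambda>_. {1..N}) R B (\<lambda>_ _. \<Delta>) (\<lambda>_ _. \<Delta>) S i t = network_red_frac N R B \<Delta> S t"
proof -
  have "(\<Sum>j\<in>{1..N}. \<Sum>t'\<in>{1..<t}. if (j, t') \<in> S then \<Delta> else 0) = \<Delta> * real (red_draws N S t)"
    unfolding red_draws_def sum.cartesian_product
    by (simp add: case_prod_unfold sum.If_cases Int_commute)
  then show ?thesis
    unfolding polya_red_prob_def network_red_frac_def by (simp add: sum.distrib)
qed

lemma polya_step_prob_complete:
  "polya_step_prob N (\<lambda>_. {1..N}) R B (\<lambda>_ _. \<Delta>) (\<lambda>_ _. \<Delta>) S t A
     = bernoulli_weight {1..N} (network_red_frac N R B \<Delta> S t) A"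
  unfolding polya_step_prob_def bernoulli_weight_def polya_red_prob_complete ..

lemma red_draws_Suc:
  assumes "S \<subseteq> {1..N} \<times> {1..<t}" "A \<subseteq> {1..N}" "t \<ge> 1"
  shows "red_draws N (S \<union> A \<times> {t}) (Suc t) = red_draws N S t + card A"
proof -
  have "(S \<union> A \<times> {t}) \<inter> {1..N} \<times> {1..<Suc t} = (S \<inter> {1..N} \<times> {1..<t}) \<union> A \<times> {t}"
    using assms by auto
  moreover have "finite (A \<times> {t})" "(S \<inter> {1..N} \<times> {1..<t}) \<inter> A \<times> {t} = {}"
    using assms(2) finite_subset by auto
  ultimately show ?thesis
    unfolding red_draws_def by (simp add: card_Un_disjoint card_cartesian_product)
qed

lemma network_red_frac_Suc:
  assumes "S \<subseteq> {1..N} \<times> {1..<t}" "A \<subseteq> {1..N}" "t \<ge> 1"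
  shows "network_red_frac N R B \<Delta> (S \<union> A \<times> {t}) (Suc t)
       = ((\<Sum>j\<in>{1..N}. real (R j)) + \<Delta> * (real (red_draws N S t) + real (card A))) /
         ((\<Sum>j\<in>{1..N}. real (R j + B j)) + real N * \<Delta> * real t)"
  unfolding network_red_frac_def red_draws_Suc[OF assms] by simp

text \<open>Given the history, the number of red draws at time \<open>t\<close> has mean \<open>N q\<^sub>t\<close>, and
  \<open>N \<Delta>\<close> balls are added in total, which keeps the red fraction unchanged on average.\<close>
lemma network_red_frac_martingale:
  assumes S: "S \<subseteq> {1..N} \<times> {1..<t}" and t: "t \<ge> 1"
    and T: "(\<Sum>j\<in>{1..N}. real (R j + B j)) > 0" and \<Delta>: "\<Delta> \<ge> 0"
  shows "(\<Sum>A\<in>Pow {1..N}. network_red_frac N R B \<Delta> (S \<union> A \<times> {t}) (Suc t)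
            * bernoulli_weight {1..N} (network_red_frac N R B \<Delta> S t) A)
       = network_red_frac N R B \<Delta> S t"
proof -
  define a where "a = (\<Sum>j\<in>{1..N}. real (R j)) + \<Delta> * real (red_draws N S t)"
  define D0 where "D0 = (\<Sum>j\<in>{1..N}. real (R j + B j)) + real N * \<Delta> * real (t - 1)"
  define D1 where "D1 = D0 + real N * \<Delta>"
  define p where "p = network_red_frac N R B \<Delta> S t"
  have D0: "D0 > 0" and D1: "D1 > 0"
    using T \<Delta> unfolding D0_def D1_def by (simp_all add: add_pos_nonneg)
  have p: "p = a / D0"
    unfolding p_def a_def D0_def network_red_frac_def ..
  have "network_red_frac N R B \<Delta> (S \<union> A \<times> {t}) (Suc t) = a / D1 + \<Delta> / D1 * real (card A)"
    if "A \<in> Pow {1..N}" for A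
    using network_red_frac_Suc[OF S _ t] that t
    unfolding a_def D1_def D0_def by (simp add: of_nat_diff add_divide_distrib algebra_simps)
  then have "(\<Sum>A\<in>Pow {1..N}. network_red_frac N R B \<Delta> (S \<union> A \<times> {t}) (Suc t)
               * bernoulli_weight {1..N} p A)
      = a / D1 * (\<Sum>A\<in>Pow {1..N}. bernoulli_weight {1..N} p A)
        + \<Delta> / D1 * (\<Sum>A\<in>Pow {1..N}. bernoulli_weight {1..N} p A * real (card A))"
    by (simp add: sum_distrib_left sum.distrib algebra_simps)
  also have "\<dots> = a / D1 + \<Delta> / D1 * (real N * p)"
    by (simp add: sum_bernoulli_weight sum_bernoulli_weight_card)
  also have "\<dots> = a * (D0 + real N * \<Delta>) / (D1 * D0)"
    using D0 D1 unfolding p by (simp add: field_simps)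
  also have "\<dots> = p"
    using D1 unfolding p D1_def[symmetric] by simp
  finally show ?thesis unfolding p_def .
qed

lemma complete_polya_expect_red_pair:
  assumes "m \<ge> 1" "k \<in> {1..N}"
  shows "complete_polya_expect N R B \<Delta> (Suc m) (\<lambda>S. of_bool ((k, Suc m) \<in> S \<and> (i, 1) \<in> S))
       = complete_polya_expect N R B \<Delta> m (\<lambda>S. of_bool ((i, 1) \<in> S) * network_red_frac N R B \<Delta> S (Suc m))"
  unfolding polya_expect_Suc polya_step_prob_complete
proof (rule polya_expect_cong)
  fix S assume "S \<subseteq> {1..N} \<times> {1..m}"
  then have pair: "(k, Suc m) \<in> S \<union> A \<times> {Suc m} \<and> (i, 1) \<in> S \<union> A \<times> {Suc m}
         \<longleftrightarrow> (i, 1) \<in> S \<and> k \<in> A" for A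
    using assms(1) by auto
  let ?w = "bernoulli_weight {1..N} (network_red_frac N R B \<Delta> S (Suc m))"
  have "(\<Sum>A\<in>Pow {1..N}. of_bool ((k, Suc m) \<in> S \<union> A \<times> {Suc m} \<and> (i, 1) \<in> S \<union> A \<times> {Suc m}) * ?w A)
      = of_bool ((i, 1) \<in> S) * (\<Sum>A\<in>Pow {1..N}. if k \<in> A then ?w A else 0)"
    unfolding pair sum_distrib_left by (intro sum.cong) auto
  also have "(\<Sum>A\<in>Pow {1..N}. if k \<in> A then ?w A else 0) = network_red_frac N R B \<Delta> S (Suc m)"
    using assms(2) by (intro sum_bernoulli_weight_mem) auto
  finally show "(\<Sum>A\<in>Pow {1..N}. of_bool ((k, Suc m) \<in> S \<union> A \<times> {Suc m} \<and> (i, 1) \<in> S \<union> A \<times> {Suc m}) * ?w A)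
      = of_bool ((i, 1) \<in> S) * network_red_frac N R B \<Delta> S (Suc m)" .
qed

lemma complete_polya_expect_red_frac_const:
  assumes "m \<ge> 1" "(\<Sum>j\<in>{1..N}. real (R j + B j)) > 0" "\<Delta> \<ge> 0"
  shows "complete_polya_expect N R B \<Delta> m (\<lambda>S. of_bool ((i, 1) \<in> S) * network_red_frac N R B \<Delta> S (Suc m))
       = complete_polya_expect N R B \<Delta> 1 (\<lambda>S. of_bool ((i, 1) \<in> S) * network_red_frac N R B \<Delta> S 2)"
  using assms(1)
proof (induction m rule: dec_induct)
  case base
  show ?case by (simp add: numeral_2_eq_2)
next
  case (step m)
  have "complete_polya_expect N R B \<Delta> (Suc m)
          (\<lambda>S. of_bool ((i, 1) \<in> S) * network_red_frac N R B \<Delta> S (Suc (Suc m)))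
      = complete_polya_expect N R B \<Delta> m (\<lambda>S. of_bool ((i, 1) \<in> S) * network_red_frac N R B \<Delta> S (Suc m))"
    unfolding polya_expect_Suc polya_step_prob_complete
  proof (rule polya_expect_cong)
    fix S assume S: "S \<subseteq> {1..N} \<times> {1..m}"
    have init_red: "(i, 1) \<in> S \<union> A \<times> {Suc m} \<longleftrightarrow> (i, 1) \<in> S" for A
      using step.hyps by auto
    have "S \<subseteq> {1..N} \<times> {1..<Suc m}"
      using S by auto
    from network_red_frac_martingale[OF this _ assms(2,3)]
    show "(\<Sum>A\<in>Pow {1..N}. of_bool ((i, 1) \<in> S \<union> A \<times> {Suc m})
                 * network_red_frac N R B \<Delta> (S \<union> A \<times> {Suc m}) (Suc (Suc m))
                 * bernoulli_weight {1..N} (network_red_frac N R B \<Delta> S (Suc m)) A)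
        = of_bool ((i, 1) \<in> S) * network_red_frac N R B \<Delta> S (Suc m)"
      by (simp only: init_red sum_distrib_left mult.assoc) simp
  qed
  then show ?case using step.IH by simp
qed

lemma complete_polya_expect_red_frac_time1:
  fixes R B :: "nat \<Rightarrow> nat"
  assumes "i \<in> {1..N}"
  defines "Rs \<equiv> \<Sum>j\<in>{1..N}. real (R j)" and "Tb \<equiv> \<Sum>j\<in>{1..N}. real (R j + B j)"
  defines "\<rho> \<equiv> Rs / Tb"
  shows "complete_polya_expect N R B \<Delta> 1 (\<lambda>S. of_bool ((i, 1) \<in> S) * network_red_frac N R B \<Delta> S 2)
       = \<rho> * (Rs + \<Delta> * (1 + (real N - 1) * \<rho>)) / (Tb + real N * \<Delta>)"
proof -
  define D1 where "D1 = Tb + real N * \<Delta>"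
  let ?w = "bernoulli_weight {1..N} \<rho>"
  have expand: "complete_polya_expect N R B \<Delta> (Suc 0) g
      = (\<Sum>A\<in>Pow {1..N}. g ({} \<union> A \<times> {Suc 0})
           * bernoulli_weight {1..N} (network_red_frac N R B \<Delta> {} (Suc 0)) A)" for g
    unfolding polya_expect_Suc polya_expect_0 polya_step_prob_complete ..
  have "network_red_frac N R B \<Delta> {} 1 = \<rho>"
    unfolding network_red_frac_def red_draws_def \<rho>_def Rs_def Tb_def by simp
  then have "complete_polya_expect N R B \<Delta> 1 (\<lambda>S. of_bool ((i, 1) \<in> S) * network_red_frac N R B \<Delta> S 2)
      = (\<Sum>A\<in>Pow {1..N}. of_bool (i \<in> A) * network_red_frac N R B \<Delta> (A \<times> {1}) 2 * ?w A)"
    using expand by simp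
  also have "\<dots> = (\<Sum>A\<in>Pow {1..N}. Rs / D1 * (if i \<in> A then ?w A else 0)
                    + \<Delta> / D1 * ((if i \<in> A then ?w A else 0) * real (card A)))"
  proof (intro sum.cong refl)
    fix A assume "A \<in> Pow {1..N}"
    then have "network_red_frac N R B \<Delta> (A \<times> {1}) 2 = (Rs + \<Delta> * real (card A)) / D1"
      using network_red_frac_Suc[of "{}" N 1 A R B \<Delta>]
      by (simp add: numeral_2_eq_2 red_draws_def Rs_def D1_def Tb_def)
    then show "of_bool (i \<in> A) * network_red_frac N R B \<Delta> (A \<times> {1}) 2 * ?w A
        = Rs / D1 * (if i \<in> A then ?w A else 0) + \<Delta> / D1 * ((if i \<in> A then ?w A else 0) * real (card A))"
      by (simp add: add_divide_distrib algebra_simps)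
  qed
  also have "\<dots> = Rs / D1 * (\<Sum>A\<in>Pow {1..N}. if i \<in> A then ?w A else 0)
                  + \<Delta> / D1 * (\<Sum>A\<in>Pow {1..N}. (if i \<in> A then ?w A else 0) * real (card A))"
    unfolding sum.distrib sum_distrib_left ..
  also have "\<dots> = Rs / D1 * \<rho> + \<Delta> / D1 * (\<rho> + (real N - 1) * \<rho>\<^sup>2)"
    unfolding sum_bernoulli_weight_mem[OF finite_atLeastAtMost assms(1)]
      sum_bernoulli_weight_mem_card[OF finite_atLeastAtMost assms(1)] by simp
  also have "\<dots> = \<rho> * (Rs + \<Delta> * (1 + (real N - 1) * \<rho>)) / D1"
    by (simp add: add_divide_distrib[symmetric] diff_divide_distrib[symmetric] algebra_simps
        power2_eq_square)
  finally show ?thesis unfolding D1_def .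
qed

lemma pair_prob_in_rho_delta:
  fixes Rs T D :: real
  assumes "real N > 0" "T > 0" "D \<ge> 0"
  shows "Rs / T * (Rs + D * (1 + (real N - 1) * (Rs / T))) / (T + real N * D)
       = Rs / T * (Rs / T + (1 + (real N - 1) * (Rs / T)) * (real N * D / T) / real N)
           / (1 + real N * D / T)"
proof -
  have "1 + real N * D / T = (T + real N * D) / T"
    using assms(2) by (simp add: field_simps)
  moreover have "Rs / T + (1 + (real N - 1) * (Rs / T)) * (real N * D / T) / real N
      = (Rs + D * (1 + (real N - 1) * (Rs / T))) / T"
    using assms(1,2) by (simp add: field_simps)
  moreover have "T + real N * D > 0"
    using assms by (intro add_pos_nonneg) auto
  ultimately show ?thesis
    using assms(2) by simp
qed

theorem lemma2:
  fixes N :: nat and R B :: "nat \<Rightarrow> nat" and \<Delta> :: real and i n :: nat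
  assumes "\<And>j. j \<in> {1..N} \<Longrightarrow> R j > 0"
      and "\<And>j. j \<in> {1..N} \<Longrightarrow> B j > 0"
      and "\<Delta> > 0"
      and "i \<in> {1..N}"
      and "n \<ge> 2"
  defines "Tbar \<equiv> (\<Sum>j\<in>{1..N}. real (R j + B j))"
  defines "\<rho> \<equiv> (\<Sum>j\<in>{1..N}. real (R j)) / Tbar"
  defines "\<delta> \<equiv> real N * \<Delta> / Tbar"
  defines "P \<equiv> polya_prob N (\<lambda>_. {1..N}) R B (\<lambda>_ _. \<Delta>) (\<lambda>_ _. \<Delta>) n"
  shows "P (\<lambda>S. (i, n) \<in> S \<and> (i, 1) \<in> S)
           = \<rho> * (\<rho> + (1 + (real N - 1) * \<rho>) * \<delta> / real N) / (1 + \<delta>)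
       \<and> (\<forall>k\<in>{1..N}. k \<noteq> i \<longrightarrow> P (\<lambda>S. (k, n) \<in> S \<and> (i, 1) \<in> S)
           = \<rho> * (\<rho> + (1 + (real N - 1) * \<rho>) * \<delta> / real N) / (1 + \<delta>))"
proof -
  have N: "real N > 0" using assms(4) by simp
  have T: "Tbar > 0"
    unfolding Tbar_def using assms(1,4) by (intro sum_pos) (auto simp del: of_nat_add)
  obtain m where n: "n = Suc m" and m: "m \<ge> 1"
    using assms(5) by (cases n) auto
  have "P (\<lambda>S. (k, n) \<in> S \<and> (i, 1) \<in> S) = \<rho> * (\<rho> + (1 + (real N - 1) * \<rho>) * \<delta> / real N) / (1 + \<delta>)"
    if "k \<in> {1..N}" for k
  proof -
    have "P (\<lambda>S. (k, n) \<in> S \<and> (i, 1) \<in> S)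
        = complete_polya_expect N R B \<Delta> 1 (\<lambda>S. of_bool ((i, 1) \<in> S) * network_red_frac N R B \<Delta> S 2)"
      unfolding P_def polya_prob_eq_expect n complete_polya_expect_red_pair[OF m that]
      using complete_polya_expect_red_frac_const[OF m] T assms(3) unfolding Tbar_def by simp
    also have "\<dots> = \<rho> * (\<rho> + (1 + (real N - 1) * \<rho>) * \<delta> / real N) / (1 + \<delta>)"
      unfolding complete_polya_expect_red_frac_time1[OF assms(4)] \<rho>_def \<delta>_def Tbar_def[symmetric]
      using assms(3) by (intro pair_prob_in_rho_delta[OF N T]) simp
    finally show ?thesis .
  qed
  then show ?thesis using assms(4) by blast
qed

end
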